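(* Let $k$ be a field and let $h_\bullet=(h_0,h_1,h_2,\ldots)$ be a sequence of nonnegative integers with $h_0=1$ that is unimodal at each tail. Let $n=h_1$ if $h_1\ge1$ and $n=1$ if $h_1=0$. Then there is an almost reverse lexicographic ideal $I$ in $R=k[x_1,\ldots,x_n]$ such that $H(R/I,d)=h_d$ for all $d\ge0$.
   Context: $H(R/I,d)=\dim_k(R/I)_d$. Degree reverse lexicographic order: for $M=x^\alpha,N=x^\beta$, $M>N$ iff $\deg M>\deg N$, or degrees are equal and for the largest $s$ with $\alpha_s\neq\beta_s$ one has $\alpha_s<\beta_s$. A monomial ideal $I$ is almost reverse lexicographic if for every monomial $M$ and every minimal monomial generator $N$ of $I$ with $\deg M=\deg N$ and $M>N$, $M\in I$ (the zero ideal counts). For a sequence $h_\bullet$ of nonnegative integers with $h_0=1$: $h^{(0)}_\bullet=h_\bullet$ and, for $1\le i<h_1$, $h^{(i)}_0=1$, $h^{(i)}_d=\max\{0,h^{(i-1)}_d-h^{(i-1)}_{d-1}\}$ for $d\ge1$. For $0\le i<\max\{1,h_1\}$, $r_i=\min\{d\ge1:h^{(i)}_d\le h^{(i)}_{d-1}\}$ ($\infty$ if none), and $D(h_\bullet)=\min\{i:r_i<\infty\}$. The sequence is unimodal at each tail if for every $i$ with $D(h_\bullet)\le i<\max\{1,h_1\}$, $h^{(i)}_d\le h^{(i)}_{d-1}$ for all $d\ge r_i$. *)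

theory Defs
  imports Main "HOL-Library.Extended_Nat"
begin

text \<open>Monomials of k[x_1,...,x_n] are exponent vectors a :: nat => nat with a i = 0 for i >= n
  (variable x_(i+1) has exponent a i).  A monomial ideal is identified with the set of monomials it
  contains (an upward closed set w.r.t. divisibility); it is spanned over k by these monomials, so
  the quotient R/I has as k-basis the monomials not in I.\<close>

definition mons :: "nat \<Rightarrow> (nat \<Rightarrow> nat) set" where
  "mons n = {a. \<forall>i\<ge>n. a i = 0}"

definition mdeg :: "nat \<Rightarrow> (nat \<Rightarrow> nat) \<Rightarrow> nat" where
  "mdeg n a = (\<Sum>i<n. a i)"

definition mdvd :: "(nat \<Rightarrow> nat) \<Rightarrow> (nat \<Rightarrow> nat) \<Rightarrow> bool" where
  "mdvd a b \<longleftrightarrow> (\<forall>i. a i \<le> b i)"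

definition monomial_ideal :: "nat \<Rightarrow> (nat \<Rightarrow> nat) set \<Rightarrow> bool" where
  "monomial_ideal n I \<longleftrightarrow> I \<subseteq> mons n \<and> (\<forall>a\<in>I. \<forall>b\<in>mons n. mdvd a b \<longrightarrow> b \<in> I)"

definition min_gens :: "(nat \<Rightarrow> nat) set \<Rightarrow> (nat \<Rightarrow> nat) set" where
  "min_gens I = {a \<in> I. \<forall>b\<in>I. mdvd b a \<longrightarrow> b = a}"

definition revlex_gt :: "nat \<Rightarrow> (nat \<Rightarrow> nat) \<Rightarrow> (nat \<Rightarrow> nat) \<Rightarrow> bool" where
  "revlex_gt n a b \<longleftrightarrow> mdeg n a > mdeg n b \<or>
     (mdeg n a = mdeg n b \<and>
      (\<exists>s<n. a s \<noteq> b s \<and> (\<forall>t. s < t \<and> t < n \<longrightarrow> a t = b t) \<and> a s < b s))"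

definition almost_revlex :: "nat \<Rightarrow> (nat \<Rightarrow> nat) set \<Rightarrow> bool" where
  "almost_revlex n I \<longleftrightarrow> monomial_ideal n I \<and>
     (\<forall>M\<in>mons n. \<forall>N\<in>min_gens I. mdeg n M = mdeg n N \<and> revlex_gt n M N \<longrightarrow> M \<in> I)"

text \<open>H(R/I,d) = dim_k (R/I)_d = number of degree-d monomials not in I.\<close>
definition hilb :: "nat \<Rightarrow> (nat \<Rightarrow> nat) set \<Rightarrow> nat \<Rightarrow> nat" where
  "hilb n I d = card {a \<in> mons n. mdeg n a = d \<and> a \<notin> I}"

text \<open>The derived sequences h^(i) (nat subtraction truncates, giving max 0).\<close>
fun hseq :: "(nat \<Rightarrow> nat) \<Rightarrow> nat \<Rightarrow> nat \<Rightarrow> nat" where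
  "hseq h 0 d = h d"
| "hseq h (Suc i) d = (if d = 0 then 1 else hseq h i d - hseq h i (d - 1))"

definition rr :: "(nat \<Rightarrow> nat) \<Rightarrow> nat \<Rightarrow> enat" where
  "rr h i = (if \<exists>d\<ge>1. hseq h i d \<le> hseq h i (d - 1)
             then enat (LEAST d. d \<ge> 1 \<and> hseq h i d \<le> hseq h i (d - 1)) else \<infinity>)"

definition DD :: "(nat \<Rightarrow> nat) \<Rightarrow> nat" where
  "DD h = (LEAST i. i < max 1 (h 1) \<and> rr h i < \<infinity>)"

definition unimodal_at_tails :: "(nat \<Rightarrow> nat) \<Rightarrow> bool" where
  "unimodal_at_tails h \<longleftrightarrow>
     (\<forall>i. DD h \<le> i \<and> i < max 1 (h 1) \<longrightarrow>
        (\<forall>d. enat d \<ge> rr h i \<longrightarrow> hseq h i d \<le> hseq h i (d - 1)))"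

end

theory Submission
  imports Defs
begin

(* Induction on h_1.  The sequence g = h^(1) of positive parts of first differences is again
   unimodal at each tail, with g_1 = h_1 - 1, so by induction some almost revlex ideal J in
   x_1, ..., x_m realizes g.  Adjoin x_(m+1) and build the standard monomials degree by degree:
   while h increases (d < r_0), take those of J together with x_(m+1) times those of degree d - 1,
   giving g_d + h_(d-1) = h_d monomials; from r_0 on h is nonincreasing and we keep the h_d
   revlex-smallest multiples of x_(m+1).  The standard sets are closed under division, so their
   complement I is a monomial ideal with Hilbert function h.  A minimal generator of I of degree
   below r_0 is not divisible by x_(m+1) and hence a minimal generator of J, so there the
   revlex condition is inherited from J; in higher degrees it holds because the standard
   monomials form a revlex-initial segment of x_(m+1) times those of the previous degree. *)

lemma mdeg_Suc: "mdeg (Suc n) a = mdeg n a + a n"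
  by (simp add: mdeg_def)

lemma mdeg_fun_upd_ge: "n \<le> i \<Longrightarrow> mdeg n (a(i := x)) = mdeg n a"
  unfolding mdeg_def by (rule sum.cong) auto

lemma Suc_mdeg_decrement:
  assumes "i < n" "0 < a i"
  shows "Suc (mdeg n (a(i := a i - 1))) = mdeg n a"
proof -
  have "mdeg n a = a i + (\<Sum>j\<in>{..<n}-{i}. a j)"
    using sum.remove[of "{..<n}" i a] assms(1) by (simp add: mdeg_def)
  moreover have "mdeg n (a(i := a i - 1)) = (a i - 1) + (\<Sum>j\<in>{..<n}-{i}. a j)"
    using sum.remove[of "{..<n}" i "a(i := a i - 1)"] assms(1) by (simp add: mdeg_def)
  ultimately show ?thesis using assms(2) by simp
qed

lemma le_mdeg: "i < n \<Longrightarrow> a i \<le> mdeg n a"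
  unfolding mdeg_def by (rule member_le_sum) simp_all

lemma mons_zero: "a \<in> mons n \<Longrightarrow> n \<le> i \<Longrightarrow> a i = 0"
  by (simp add: mons_def)

lemma mdeg_eq_0_imp_zero: "a \<in> mons n \<Longrightarrow> mdeg n a = 0 \<Longrightarrow> a i = 0"
  using le_mdeg[of i n a] mons_zero[of a n i] by (cases "i < n") auto

lemma fun_upd_in_mons: "a \<in> mons n \<Longrightarrow> i < n \<Longrightarrow> a(i := x) \<in> mons n"
  by (auto simp: mons_def)

lemma mons_subset_Suc: "mons n \<subseteq> mons (Suc n)"
  by (auto simp: mons_def)

lemma mons_Suc_last_zero: "a \<in> mons (Suc n) \<Longrightarrow> a n = 0 \<Longrightarrow> a \<in> mons n"
  unfolding mons_def by (auto dest: le_imp_less_or_eq simp: Suc_le_eq)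

lemma mdeg_Suc_mons: "a \<in> mons n \<Longrightarrow> mdeg (Suc n) a = mdeg n a"
  by (simp add: mdeg_Suc mons_def)

lemma finite_mons_deg: "finite {a \<in> mons n. mdeg n a = d}"
proof (rule finite_subset)
  show "{a \<in> mons n. mdeg n a = d} \<subseteq>
      {f. \<forall>i. (i \<in> {..<n} \<longrightarrow> f i \<in> {..d}) \<and> (i \<notin> {..<n} \<longrightarrow> f i = 0)}"
    using le_mdeg by (auto simp: mons_def)
qed (rule finite_set_of_finite_funs; simp)

lemma revlex_gt_irrefl: "\<not> revlex_gt n a a"
  by (auto simp: revlex_gt_def)

lemma revlex_gt_trans:
  assumes "revlex_gt n a b" "revlex_gt n b c"
  shows "revlex_gt n a c"
proof (cases "mdeg n a = mdeg n b \<and> mdeg n b = mdeg n c")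
  case True
  obtain s where s: "s < n" "a s < b s" "\<forall>t. s < t \<and> t < n \<longrightarrow> a t = b t"
    using assms(1) True by (auto simp: revlex_gt_def)
  obtain s' where s': "s' < n" "b s' < c s'" "\<forall>t. s' < t \<and> t < n \<longrightarrow> b t = c t"
    using assms(2) True by (auto simp: revlex_gt_def)
  have "a (max s s') < c (max s s')"
    by (cases s s' rule: linorder_cases) (use s s' in auto)
  moreover have "\<forall>t. max s s' < t \<and> t < n \<longrightarrow> a t = c t"
    using s s' by auto
  ultimately show ?thesis
    using True s s' unfolding revlex_gt_def by (intro disjI2 conjI exI[of _ "max s s'"]) auto
next
  case False
  then show ?thesis using assms by (auto simp: revlex_gt_def)
qed

lemma revlex_gt_total:
  assumes "a \<in> mons n" "b \<in> mons n" "mdeg n a = mdeg n b" "a \<noteq> b"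
  shows "revlex_gt n a b \<or> revlex_gt n b a"
proof -
  define S where "S = {i. i < n \<and> a i \<noteq> b i}"
  obtain i where "a i \<noteq> b i" using assms(4) by auto
  moreover have "i < n" using calculation assms(1,2) mons_zero[of _ n i] by (metis not_less)
  ultimately have "i \<in> S" by (simp add: S_def)
  then have "S \<noteq> {}" by blast
  moreover have "finite S" by (simp add: S_def)
  ultimately have s: "Max S < n" "a (Max S) \<noteq> b (Max S)"
    and above: "\<forall>t. Max S < t \<and> t < n \<longrightarrow> a t = b t"
    using Max_in[of S] Max_ge[of S] by (auto simp: S_def)
  show ?thesis
  proof (cases "a (Max S) < b (Max S)")
    case True
    then have "revlex_gt n a b"
      unfolding revlex_gt_def using assms(3) s above by blast
    then show ?thesis ..
  next
    case False
    then have "revlex_gt n b a"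
      unfolding revlex_gt_def using assms(3) s above by (metis linorder_neqE_nat)
    then show ?thesis ..
  qed
qed

lemma revlex_gt_last_zero:
  assumes "revlex_gt (Suc n) a b" "mdeg (Suc n) a = mdeg (Suc n) b" "b n = 0"
  shows "a n = 0"
proof -
  obtain s where "s < Suc n" "a s < b s" "\<forall>t. s < t \<and> t < Suc n \<longrightarrow> a t = b t"
    using assms(1,2) by (auto simp: revlex_gt_def)
  then show ?thesis using assms(3) by (cases "s = n") auto
qed

lemma revlex_gt_drop_last:
  assumes "revlex_gt (Suc n) a b" "mdeg (Suc n) a = mdeg (Suc n) b" "a n = 0" "b n = 0"
  shows "revlex_gt n a b"
proof -
  obtain s where s: "s < Suc n" "a s < b s" "\<forall>t. s < t \<and> t < Suc n \<longrightarrow> a t = b t"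
    using assms(1,2) by (auto simp: revlex_gt_def)
  then have "s < n" using assms(4) by (cases "s = n") auto
  moreover have "mdeg n a = mdeg n b" using assms(2-4) by (simp add: mdeg_Suc)
  ultimately show ?thesis using s unfolding revlex_gt_def by auto
qed

lemma revlex_gt_exchange_last:
  assumes "i < n" "0 < a i"
  shows "revlex_gt (Suc n) a (a(i := a i - 1, n := Suc (a n)))"
proof -
  have "mdeg (Suc n) (a(i := a i - 1, n := Suc (a n))) = mdeg (Suc n) a"
    using Suc_mdeg_decrement[of i n a] assms by (simp add: mdeg_Suc mdeg_fun_upd_ge)
  then show ?thesis
    unfolding revlex_gt_def by (intro disjI2 conjI exI[of _ n]) auto
qed

definition revlex_rank :: "nat \<Rightarrow> (nat \<Rightarrow> nat) set \<Rightarrow> (nat \<Rightarrow> nat) \<Rightarrow> nat" where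
  "revlex_rank n S a = card {b \<in> S. revlex_gt n a b}"

definition revlex_bottom :: "nat \<Rightarrow> nat \<Rightarrow> (nat \<Rightarrow> nat) set \<Rightarrow> (nat \<Rightarrow> nat) set" where
  "revlex_bottom n k S = {a \<in> S. revlex_rank n S a < k}"

lemma revlex_bottom_subset: "revlex_bottom n k S \<subseteq> S"
  by (auto simp: revlex_bottom_def)

lemma revlex_rank_strict_mono:
  assumes "finite S" "b \<in> S" "revlex_gt n a b"
  shows "revlex_rank n S b < revlex_rank n S a"
proof -
  have "{c \<in> S. revlex_gt n b c} \<subset> {c \<in> S. revlex_gt n a c}"
    using assms revlex_gt_trans revlex_gt_irrefl by blast
  then show ?thesis unfolding revlex_rank_def using assms(1) by (simp add: psubset_card_mono)
qed

lemma revlex_bottom_downward_closed: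
  assumes "finite S" "a \<in> revlex_bottom n k S" "b \<in> S" "revlex_gt n a b"
  shows "b \<in> revlex_bottom n k S"
  using assms revlex_rank_strict_mono[OF assms(1,3,4)] by (auto simp: revlex_bottom_def)

lemma bij_betw_revlex_rank:
  assumes "finite S" "S \<subseteq> {a \<in> mons n. mdeg n a = d}"
  shows "bij_betw (revlex_rank n S) S {..<card S}"
proof -
  have inj: "inj_on (revlex_rank n S) S"
  proof (rule inj_onI, rule ccontr)
    fix a b assume ab: "a \<in> S" "b \<in> S" "revlex_rank n S a = revlex_rank n S b" "a \<noteq> b"
    then have "revlex_gt n a b \<or> revlex_gt n b a"
      using assms(2) by (intro revlex_gt_total) auto
    then show False
      using ab revlex_rank_strict_mono[OF assms(1)] by fastforce
  qed
  have "revlex_rank n S ` S \<subseteq> {..<card S}"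
  proof
    fix r assume "r \<in> revlex_rank n S ` S"
    then obtain a where a: "a \<in> S" "r = revlex_rank n S a" by blast
    have "{b \<in> S. revlex_gt n a b} \<subset> S" using a(1) revlex_gt_irrefl by blast
    then show "r \<in> {..<card S}"
      using a(2) assms(1) by (simp add: revlex_rank_def psubset_card_mono)
  qed
  moreover have "card (revlex_rank n S ` S) = card {..<card S}"
    using inj by (simp add: card_image)
  ultimately have "revlex_rank n S ` S = {..<card S}"
    by (intro card_subset_eq) simp_all
  then show ?thesis using inj by (simp add: bij_betw_def)
qed

lemma card_revlex_bottom:
  assumes "finite S" "S \<subseteq> {a \<in> mons n. mdeg n a = d}"
  shows "card (revlex_bottom n k S) = min k (card S)"
proof -
  have "bij_betw (revlex_rank n S) (revlex_bottom n k S) {r \<in> {..<card S}. r < k}"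
    using bij_betw_revlex_rank[OF assms] unfolding revlex_bottom_def by (rule bij_betw_Collect) simp
  then have "card (revlex_bottom n k S) = card {r \<in> {..<card S}. r < k}"
    by (rule bij_betw_same_card)
  also have "{r \<in> {..<card S}. r < k} = {..<min k (card S)}" by auto
  finally show ?thesis by simp
qed

locale almost_revlex_extension =
  fixes m :: nat and J :: "(nat \<Rightarrow> nat) set" and g h :: "nat \<Rightarrow> nat" and r :: enat
  assumes J_almost_revlex: "almost_revlex m J"
    and hilb_J: "\<And>d. hilb m J d = g d"
    and h_0: "h 0 = g 0"
    and h_Suc_below: "\<And>d. enat (Suc d) < r \<Longrightarrow> h (Suc d) = h d + g (Suc d)"
    and h_Suc_above: "\<And>d. \<not> enat (Suc d) < r \<Longrightarrow> h (Suc d) \<le> h d"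
begin

definition std_J :: "nat \<Rightarrow> (nat \<Rightarrow> nat) set" where
  "std_J d = {a \<in> mons m. mdeg m a = d \<and> a \<notin> J}"

definition times_last :: "(nat \<Rightarrow> nat) \<Rightarrow> nat \<Rightarrow> nat" where
  "times_last a = a(m := Suc (a m))"

primrec std_I :: "nat \<Rightarrow> (nat \<Rightarrow> nat) set" where
  "std_I 0 = std_J 0"
| "std_I (Suc d) = (if enat (Suc d) < r then std_J (Suc d) \<union> times_last ` std_I d
                   else revlex_bottom (Suc m) (h (Suc d)) (times_last ` std_I d))"

definition I :: "(nat \<Rightarrow> nat) set" where
  "I = {a \<in> mons (Suc m). a \<notin> std_I (mdeg (Suc m) a)}"

lemma mdeg_times_last: "mdeg (Suc m) (times_last a) = Suc (mdeg (Suc m) a)"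
  by (simp add: times_last_def mdeg_Suc mdeg_fun_upd_ge)

lemma times_last_in_mons: "a \<in> mons (Suc m) \<Longrightarrow> times_last a \<in> mons (Suc m)"
  by (simp add: times_last_def fun_upd_in_mons)

lemma inj_times_last: "inj times_last"
  by (rule injI) (metis fun_upd_triv fun_upd_upd nat.inject times_last_def fun_upd_same)

lemma times_last_decrement_last: "0 < a m \<Longrightarrow> times_last (a(m := a m - 1)) = a"
  by (auto simp: times_last_def fun_eq_iff)

lemma times_last_fun_upd: "i \<noteq> m \<Longrightarrow> times_last (a(i := x)) = (times_last a)(i := x)"
  by (auto simp: times_last_def fun_eq_iff)

lemma not_in_times_last_image: "b m = 0 \<Longrightarrow> b \<notin> times_last ` X"
  by (auto simp: times_last_def)

lemma std_J_last_zero: "a \<in> std_J d \<Longrightarrow> a m = 0"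
  unfolding std_J_def using mons_zero[of a m m] by simp

lemma std_J_subset: "std_J d \<subseteq> {a \<in> mons (Suc m). mdeg (Suc m) a = d}"
  using mons_subset_Suc by (auto simp: std_J_def mdeg_Suc_mons)

lemma finite_std_J: "finite (std_J d)"
  by (rule finite_subset[OF _ finite_mons_deg[of m d]]) (auto simp: std_J_def)

lemma card_std_J: "card (std_J d) = g d"
  using hilb_J[of d] by (simp add: hilb_def std_J_def)

lemma std_J_decrement:
  assumes "u \<in> std_J (Suc d)" "i < m" "0 < u i"
  shows "u(i := u i - 1) \<in> std_J d"
proof -
  have u: "u \<in> mons m" "mdeg m u = Suc d" "u \<notin> J" using assms(1) by (auto simp: std_J_def)
  have "u(i := u i - 1) \<notin> J"
    using J_almost_revlex u assms(2)
    unfolding almost_revlex_def monomial_ideal_def mdvd_def by force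
  then show ?thesis
    using u assms Suc_mdeg_decrement[of i m u] by (simp add: std_J_def fun_upd_in_mons)
qed

lemma std_I_subset: "std_I d \<subseteq> {a \<in> mons (Suc m). mdeg (Suc m) a = d}"
proof (induction d)
  case 0
  then show ?case using std_J_subset by simp
next
  case (Suc d)
  then have "times_last ` std_I d \<subseteq> {a \<in> mons (Suc m). mdeg (Suc m) a = Suc d}"
    by (auto simp: mdeg_times_last times_last_in_mons)
  then show ?case
    using std_J_subset[of "Suc d"] revlex_bottom_subset[of "Suc m" "h (Suc d)"] by (simp; blast)
qed

lemma finite_std_I: "finite (std_I d)"
  by (rule finite_subset[OF std_I_subset finite_mons_deg])

lemma card_std_I: "card (std_I d) = h d"
proof (induction d)
  case 0
  then show ?case using card_std_J h_0 by simp
next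
  case (Suc d)
  have card_image: "card (times_last ` std_I d) = h d"
    using Suc.IH card_image[OF inj_on_subset[OF inj_times_last]] by simp
  have finite_image: "finite (times_last ` std_I d)" using finite_std_I by simp
  show ?case
  proof (cases "enat (Suc d) < r")
    case True
    have "std_J (Suc d) \<inter> times_last ` std_I d = {}"
      using std_J_last_zero not_in_times_last_image by blast
    then show ?thesis
      using True h_Suc_below card_image card_std_J
      by (simp add: card_Un_disjoint[OF finite_std_J finite_image])
  next
    case False
    have "times_last ` std_I d \<subseteq> {a \<in> mons (Suc m). mdeg (Suc m) a = Suc d}"
      using std_I_subset[of d] by (auto simp: mdeg_times_last times_last_in_mons)
    then show ?thesis
      using False h_Suc_above[of d] card_image card_revlex_bottom[OF finite_image] by simp
  qed
qed

lemma std_J_subset_std_I: "d = 0 \<or> enat d < r \<Longrightarrow> std_J d \<subseteq> std_I d"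
  by (cases d) auto

lemma std_I_last_zero:
  assumes "b \<in> std_I d" "b m = 0"
  shows "b \<in> std_J d"
proof (cases d)
  case (Suc d')
  then show ?thesis
    using assms not_in_times_last_image[of b] revlex_bottom_subset[of "Suc m" "h d"]
    by (simp split: if_splits; blast)
qed (use assms in simp)

lemma std_I_exchange:
  assumes "u \<in> std_I d" "i < m" "0 < u i"
  shows "times_last (u(i := u i - 1)) \<in> std_I d"
  using assms(1,3)
proof (induction d arbitrary: u)
  case 0
  then show ?case using std_I_subset[of 0] mdeg_eq_0_imp_zero[of u "Suc m" i] by auto
next
  case (Suc d)
  have shifted: "times_last (u(i := u i - 1)) \<in> times_last ` std_I d"
    if "u = times_last w" "w \<in> std_I d" for w
  proof -
    have "0 < w i" "u i = w i" using that Suc.prems(2) assms(2) by (simp_all add: times_last_def)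
    then have "times_last (w(i := w i - 1)) \<in> std_I d" using Suc.IH that(2) by blast
    moreover have "u(i := u i - 1) = times_last (w(i := w i - 1))"
      using that(1) \<open>u i = w i\<close> assms(2) by (simp add: times_last_fun_upd)
    ultimately show ?thesis by simp
  qed
  show ?case
  proof (cases "enat (Suc d) < r")
    case True
    have "d = 0 \<or> enat d < r" using True by (cases d) (auto intro: order.strict_trans[rotated])
    then have "u \<in> std_J (Suc d) \<Longrightarrow> u(i := u i - 1) \<in> std_I d"
      using std_J_decrement[of u d i] assms(2) Suc.prems(2) std_J_subset_std_I by blast
    moreover have "u \<in> std_J (Suc d) \<or> (\<exists>w. u = times_last w \<and> w \<in> std_I d)"
      using True Suc.prems(1) by auto
    ultimately have "times_last (u(i := u i - 1)) \<in> times_last ` std_I d"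
      using shifted by blast
    then show ?thesis using True by (simp del: fun_upd_apply)
  next
    case False
    then have bottom: "u \<in> revlex_bottom (Suc m) (h (Suc d)) (times_last ` std_I d)"
      using Suc.prems(1) by simp
    then obtain w where "u = times_last w" "w \<in> std_I d"
      using revlex_bottom_subset by blast
    then have v: "times_last (u(i := u i - 1)) \<in> times_last ` std_I d" by (rule shifted)
    have "revlex_gt (Suc m) u (times_last (u(i := u i - 1)))"
      using revlex_gt_exchange_last[of i m u] assms(2) Suc.prems(2)
      by (simp add: times_last_def)
    then show ?thesis
      using revlex_bottom_downward_closed[OF _ bottom v] finite_std_I False by (simp del: fun_upd_apply)
  qed
qed

lemma std_I_decrement:
  assumes "b \<in> std_I (Suc d)" "i < Suc m" "0 < b i"
  shows "b(i := b i - 1) \<in> std_I d"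
proof (cases "b \<in> times_last ` std_I d")
  case True
  then obtain w where w: "b = times_last w" "w \<in> std_I d" by blast
  show ?thesis
  proof (cases "i = m")
    case True
    then show ?thesis using w by (simp add: times_last_def)
  next
    case False
    then have "0 < w i" "b i = w i" using w(1) assms(3) by (simp_all add: times_last_def)
    then have "times_last (w(i := w i - 1)) \<in> std_I d"
      using std_I_exchange[OF w(2)] False assms(2) by simp
    then show ?thesis using w(1) False \<open>b i = w i\<close> by (simp add: times_last_fun_upd)
  qed
next
  case False
  then have below: "enat (Suc d) < r" and b: "b \<in> std_J (Suc d)"
    using assms(1) revlex_bottom_subset[of "Suc m"] by (auto split: if_splits)
  have "i < m" using std_J_last_zero[OF b] assms(2,3) by (cases "i = m") auto
  moreover have "d = 0 \<or> enat d < r" using below by (cases d) (auto intro: order.strict_trans[rotated])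
  ultimately show ?thesis using std_J_decrement[OF b _ assms(3)] std_J_subset_std_I by blast
qed

lemma std_I_divisor:
  "b \<in> std_I d \<Longrightarrow> a \<in> mons (Suc m) \<Longrightarrow> mdvd a b \<Longrightarrow> a \<in> std_I (mdeg (Suc m) a)"
proof (induction d arbitrary: b)
  case 0
  then have "b \<in> mons (Suc m)" "mdeg (Suc m) b = 0" using std_I_subset[of 0] by blast+
  then have "a = b" using 0 mdeg_eq_0_imp_zero by (fastforce simp: mdvd_def fun_eq_iff)
  then show ?case using 0 std_I_subset[of 0] by auto
next
  case (Suc d)
  have b: "b \<in> mons (Suc m)" "mdeg (Suc m) b = Suc d" using Suc.prems(1) std_I_subset by blast+
  show ?case
  proof (cases "a = b")
    case True
    then show ?thesis using Suc.prems(1) b by simp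
  next
    case False
    then obtain i where i: "a i < b i" using Suc.prems(3) unfolding mdvd_def
      by (metis antisym fun_eq_iff not_le)
    then have "i < Suc m" using b(1) mons_zero[of b "Suc m" i] by (metis not_less not_less0)
    then have "b(i := b i - 1) \<in> std_I d" using std_I_decrement Suc.prems(1) i by simp
    moreover have "mdvd a (b(i := b i - 1))" using Suc.prems(3) i by (auto simp: mdvd_def)
    ultimately show ?thesis using Suc.IH Suc.prems(2) by blast
  qed
qed

lemma monomial_ideal_I: "monomial_ideal (Suc m) I"
  unfolding monomial_ideal_def I_def using std_I_divisor by blast

lemma hilb_I: "hilb (Suc m) I d = h d"
proof -
  have "{a \<in> mons (Suc m). mdeg (Suc m) a = d \<and> a \<notin> I} = std_I d"
    using std_I_subset[of d] by (auto simp: I_def)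
  then show ?thesis using card_std_I by (simp add: hilb_def)
qed

lemma min_gens_I_decrement:
  assumes "N \<in> min_gens I" "mdeg (Suc m) N = Suc d" "j < Suc m" "0 < N j"
  shows "N(j := N j - 1) \<in> std_I d"
proof -
  have N: "N \<in> mons (Suc m)" using assms(1) by (simp add: min_gens_def I_def)
  have "N(j := N j - 1) \<noteq> N" using assms(4) by (metis fun_upd_same diff_less less_irrefl zero_less_one)
  moreover have "mdvd (N(j := N j - 1)) N" by (simp add: mdvd_def)
  ultimately have "N(j := N j - 1) \<notin> I" using assms(1) by (auto simp: min_gens_def)
  moreover have "mdeg (Suc m) (N(j := N j - 1)) = d"
    using Suc_mdeg_decrement[of j "Suc m" N] assms(2-4) by simp
  ultimately show ?thesis using N assms(3) by (simp add: I_def fun_upd_in_mons)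
qed

lemma min_gens_I_last_zero:
  assumes "N \<in> min_gens I" "d = mdeg (Suc m) N" "d = 0 \<or> enat d < r"
  shows "N m = 0"
proof (rule ccontr)
  assume "N m \<noteq> 0"
  then have "d \<noteq> 0" using le_mdeg[of m "Suc m" N] assms(2) by simp
  then obtain d' where d': "d = Suc d'" by (cases d) auto
  then have "N(m := N m - 1) \<in> std_I d'"
    using min_gens_I_decrement assms(1,2) \<open>N m \<noteq> 0\<close> by simp
  then have "N \<in> times_last ` std_I d'"
    using times_last_decrement_last[of N] \<open>N m \<noteq> 0\<close> by (metis image_eqI neq0_conv)
  then have "N \<in> std_I d" using d' assms(3) by simp
  then show False using assms(1,2) by (simp add: min_gens_def I_def)
qed

lemma min_gens_I_in_min_gens_J:
  assumes "N \<in> min_gens I" "N m = 0" "d = mdeg (Suc m) N" "d = 0 \<or> enat d < r"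
  shows "N \<in> min_gens J"
proof -
  have N: "N \<in> mons m" "mdeg m N = d" "N \<notin> std_I d"
    using assms mons_Suc_last_zero mdeg_Suc_mons by (auto simp: min_gens_def I_def)
  then have "N \<in> J" using std_J_subset_std_I[OF assms(4)] by (auto simp: std_J_def)
  moreover have "b = N" if "b \<in> J" "mdvd b N" for b
  proof -
    have b: "b \<in> mons m" using that(1) J_almost_revlex by (auto simp: almost_revlex_def monomial_ideal_def)
    then have "b \<notin> std_I (mdeg (Suc m) b)"
      using std_I_last_zero[of b] mons_zero[of b m m] that(1) by (auto simp: std_J_def)
    then have "b \<in> I" using b mons_subset_Suc by (auto simp: I_def)
    then show "b = N" using assms(1) that(2) by (simp add: min_gens_def)
  qed
  ultimately show ?thesis by (simp add: min_gens_def)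
qed

lemma almost_revlex_I: "almost_revlex (Suc m) I"
  unfolding almost_revlex_def
proof (intro conjI monomial_ideal_I ballI impI)
  fix M N assume M: "M \<in> mons (Suc m)" and N: "N \<in> min_gens I"
    and MN: "mdeg (Suc m) M = mdeg (Suc m) N \<and> revlex_gt (Suc m) M N"
  define d where "d = mdeg (Suc m) N"
  have N_std: "N \<notin> std_I d" using N by (simp add: min_gens_def I_def d_def)
  show "M \<in> I"
  proof (rule ccontr)
    assume "M \<notin> I"
    then have M_std: "M \<in> std_I d" using M MN by (simp add: I_def d_def)
    show False
    proof (cases "d = 0 \<or> enat d < r")
      case True
      have "N m = 0" using min_gens_I_last_zero[OF N d_def True] .
      moreover have "M m = 0" using revlex_gt_last_zero MN \<open>N m = 0\<close> by blast
      ultimately have "M \<in> mons m" "N \<in> mons m" "revlex_gt m M N" "mdeg m M = mdeg m N"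
        using M N MN mons_Suc_last_zero revlex_gt_drop_last
        by (auto simp: min_gens_def I_def mdeg_Suc)
      then have "M \<in> J"
        using J_almost_revlex min_gens_I_in_min_gens_J[OF N \<open>N m = 0\<close> d_def True]
        unfolding almost_revlex_def by blast
      then show False using std_I_last_zero[OF M_std \<open>M m = 0\<close>] by (simp add: std_J_def)
    next
      case False
      then obtain d' where d': "d = Suc d'" "\<not> enat (Suc d') < r" by (cases d) auto
      then have bottom: "M \<in> revlex_bottom (Suc m) (h d) (times_last ` std_I d')"
        using M_std by simp
      then have "M m \<noteq> 0"
        using revlex_bottom_subset not_in_times_last_image by blast
      then have "N m \<noteq> 0" using revlex_gt_last_zero[of m M N] MN by auto
      then have "N \<in> times_last ` std_I d'"
        using min_gens_I_decrement[OF N] d' times_last_decrement_last[of N]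
        by (metis d_def image_eqI lessI neq0_conv)
      then have "N \<in> std_I d"
        using revlex_bottom_downward_closed[OF _ bottom] finite_std_I MN d' by simp
      then show False using N_std by simp
    qed
  qed
qed

end

lemma exists_almost_revlex_extension:
  assumes "almost_revlex m J" "\<And>d. hilb m J d = g d" "h 0 = g 0"
    "\<And>d. enat (Suc d) < r \<Longrightarrow> h (Suc d) = h d + g (Suc d)"
    "\<And>d. \<not> enat (Suc d) < r \<Longrightarrow> h (Suc d) \<le> h d"
  shows "\<exists>I. almost_revlex (Suc m) I \<and> (\<forall>d. hilb (Suc m) I d = h d)"
proof -
  interpret almost_revlex_extension m J g h r
    using assms by unfold_locales auto
  show ?thesis using almost_revlex_I hilb_I by blast
qed

lemma almost_revlex_0_empty: "almost_revlex 0 {}"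
  by (simp add: almost_revlex_def monomial_ideal_def min_gens_def)

lemma hilb_0_empty: "hilb 0 {} d = (if d = 0 then 1 else 0)"
proof -
  have "mons 0 = {\<lambda>_. 0}" by (auto simp: mons_def)
  then show ?thesis by (simp add: hilb_def mdeg_def)
qed

lemma hseq_hseq_1: "hseq (hseq h 1) i d = hseq h (Suc i) d"
  by (induction i arbitrary: d) auto

lemma rr_hseq_1: "rr (hseq h 1) i = rr h (Suc i)"
  by (simp only: rr_def hseq_hseq_1)

lemma hseq_at_0: "h 0 = 1 \<Longrightarrow> hseq h i 0 = 1"
  by (cases i) auto

lemma hseq_at_1: "h 0 = 1 \<Longrightarrow> hseq h i 1 = h 1 - i"
  by (induction i) (simp_all add: hseq_at_0)

lemma rr_finite: "h 0 = 1 \<Longrightarrow> h 1 \<le> Suc i \<Longrightarrow> rr h i < \<infinity>"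
  using hseq_at_0[of h i] hseq_at_1[of h i] by (auto simp: rr_def intro!: exI[of _ 1])

lemma hseq_increasing_below_rr:
  assumes "enat (Suc d) < rr h i"
  shows "hseq h i d < hseq h i (Suc d)"
proof (rule ccontr)
  let ?P = "\<lambda>d. d \<ge> 1 \<and> hseq h i d \<le> hseq h i (d - 1)"
  assume "\<not> hseq h i d < hseq h i (Suc d)"
  then have "?P (Suc d)" by simp
  then have "rr h i \<le> enat (Suc d)" unfolding rr_def by (auto intro: Least_le)
  then show False using assms by simp
qed

lemma unimodal_at_tails_nonincreasing:
  assumes "unimodal_at_tails h" "\<not> enat (Suc d) < rr h 0"
  shows "h (Suc d) \<le> h d"
proof -
  have "rr h 0 < \<infinity>" using assms(2) by (cases "rr h 0") auto
  then have "DD h = 0" unfolding DD_def by (intro Least_equality) auto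
  then have "\<forall>d. rr h 0 \<le> enat d \<longrightarrow> hseq h 0 d \<le> hseq h 0 (d - 1)"
    using assms(1) unfolding unimodal_at_tails_def by (metis le0 max.strict_coboundedI1 zero_less_one)
  then show ?thesis using assms(2) by (metis diff_Suc_1 hseq.simps(1) not_less)
qed

lemma DD_le_Suc_DD_hseq_1:
  assumes "h 0 = 1" "h 1 = Suc (Suc n)"
  shows "DD h \<le> Suc (DD (hseq h 1))"
proof -
  let ?g = "hseq h 1"
  have g1: "?g 1 = Suc n" using hseq_at_1[of h 1] assms by simp
  have "n < max 1 (?g 1) \<and> rr ?g n < \<infinity>"
    using g1 rr_hseq_1[of h n] rr_finite[of h "Suc n"] assms by simp
  then have "DD ?g < max 1 (?g 1) \<and> rr ?g (DD ?g) < \<infinity>"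
    unfolding DD_def by (rule LeastI)
  then have "Suc (DD ?g) < max 1 (h 1) \<and> rr h (Suc (DD ?g)) < \<infinity>"
    using g1 assms(2) rr_hseq_1[of h "DD ?g"] by simp
  then show ?thesis unfolding DD_def by (rule Least_le)
qed

lemma unimodal_at_tails_hseq_1:
  assumes "h 0 = 1" "h 1 = Suc (Suc n)" "unimodal_at_tails h"
  shows "unimodal_at_tails (hseq h 1)"
  unfolding unimodal_at_tails_def
proof (intro allI impI)
  fix i d
  assume i: "DD (hseq h 1) \<le> i \<and> i < max 1 (hseq h 1 1)" and d: "rr (hseq h 1) i \<le> enat d"
  have "DD h \<le> Suc i \<and> Suc i < max 1 (h 1)"
    using i DD_le_Suc_DD_hseq_1[OF assms(1,2)] hseq_at_1[of h 1] assms(1,2) by simp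
  then have "\<forall>d. rr h (Suc i) \<le> enat d \<longrightarrow> hseq h (Suc i) d \<le> hseq h (Suc i) (d - 1)"
    using assms(3) unfolding unimodal_at_tails_def by blast
  then show "hseq (hseq h 1) i d \<le> hseq (hseq h 1) i (d - 1)"
    using d by (simp only: hseq_hseq_1 rr_hseq_1)
qed

lemma exists_almost_revlex_h1_le_1:
  assumes "h 0 = 1" "h 1 \<le> 1" "unimodal_at_tails h"
  shows "\<exists>I. almost_revlex 1 I \<and> (\<forall>d. hilb 1 I d = h d)"
proof -
  have above: "\<not> enat (Suc d) < rr h 0" for d
  proof
    assume "enat (Suc d) < rr h 0"
    then have "enat 1 < rr h 0" by (rule order.strict_trans1[rotated]) simp
    then have "h 0 < h 1" using hseq_increasing_below_rr[of 0 h 0] by simp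
    then show False using assms(1,2) by simp
  qed
  show ?thesis
    using exists_almost_revlex_extension[of 0 "{}" "\<lambda>d. if d = 0 then 1 else 0" h "rr h 0"]
      almost_revlex_0_empty hilb_0_empty assms(1) above
      unimodal_at_tails_nonincreasing[OF assms(3)]
    by simp
qed

lemma exists_almost_revlex_hilb_eq:
  assumes "h 0 = 1" "h 1 = Suc n" "unimodal_at_tails h"
  shows "\<exists>I. almost_revlex (Suc n) I \<and> (\<forall>d. hilb (Suc n) I d = h d)"
  using assms
proof (induction n arbitrary: h)
  case 0
  then show ?case using exists_almost_revlex_h1_le_1 by simp
next
  case (Suc n)
  define g where "g = hseq h 1"
  have "g 0 = 1" "g 1 = Suc n" using hseq_at_1[of h 1] Suc.prems(1,2) by (simp_all add: g_def)
  moreover have "unimodal_at_tails g"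
    using unimodal_at_tails_hseq_1 Suc.prems by (simp add: g_def)
  ultimately obtain J where "almost_revlex (Suc n) J" "\<forall>d. hilb (Suc n) J d = g d"
    using Suc.IH by blast
  moreover have "h (Suc d) = h d + g (Suc d)" if "enat (Suc d) < rr h 0" for d
    using hseq_increasing_below_rr[OF that] by (simp add: g_def)
  ultimately show ?case
    using exists_almost_revlex_extension[of "Suc n" J g h "rr h 0"] \<open>g 0 = 1\<close> Suc.prems(1)
      unimodal_at_tails_nonincreasing[OF Suc.prems(3)]
    by simp
qed

theorem theorem3p9:
  fixes h :: "nat \<Rightarrow> nat"
  assumes "h 0 = 1"
    and "unimodal_at_tails h"
  shows "\<exists>I. almost_revlex (if h 1 \<ge> 1 then h 1 else 1) I \<and>
             (\<forall>d. hilb (if h 1 \<ge> 1 then h 1 else 1) I d = h d)"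
proof (cases "h 1")
  case 0
  then show ?thesis using exists_almost_revlex_h1_le_1 assms by simp
next
  case (Suc n)
  then show ?thesis using exists_almost_revlex_hilb_eq assms by simp
qed

end
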